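(* Let $n\ge 3$ and let $C_n=(v_0,\dots,v_{n-1})$ be the cycle. In the Random Majority Model (RMM) on $C_n$, the only winning set is the set of all nodes. In the Majority Model (MM) on $C_n$, the minimum size of a winning set equals $\lfloor n/2\rfloor+1$.
   Context: A coloring is a map from the nodes to $\{b,w\}$. In MM, all nodes update simultaneously: a node adopts the color strictly more frequent among its neighbors in the previous round and keeps its color in case of a tie. RMM is the same except that in case of a tie the node chooses blue or white independently and uniformly at random. A node set $S$ is a winning set if, whenever all nodes of $S$ are blue (resp. white) initially, the process eventually reaches the coloring in which all nodes are blue (resp. white), regardless of the initial colors of the nodes outside $S$ and of all random choices (in RMM). *)

theory Defs
  imports Main
begin

datatype color = Blue | White

text \<open>A graph is given by a node set V and a neighbourhood function N.
  A coloring is a map from nodes to colors (values outside V are irrelevant).\<close>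

definition num_col :: "('a \<Rightarrow> 'a set) \<Rightarrow> ('a \<Rightarrow> color) \<Rightarrow> color \<Rightarrow> 'a \<Rightarrow> nat" where
  "num_col N c x v = card {u \<in> N v. c u = x}"

definition mm_step :: "('a \<Rightarrow> 'a set) \<Rightarrow> ('a \<Rightarrow> color) \<Rightarrow> ('a \<Rightarrow> color)" where
  "mm_step N c = (\<lambda>v. if num_col N c Blue v > num_col N c White v then Blue
                       else if num_col N c White v > num_col N c Blue v then White
                       else c v)"

text \<open>Possible successors in the Random Majority Model: strict majorities are
  adopted, ties may be resolved either way (every realisation of the random choices).\<close>
definition rmm_succ :: "'a set \<Rightarrow> ('a \<Rightarrow> 'a set) \<Rightarrow> ('a \<Rightarrow> color) \<Rightarrow> ('a \<Rightarrow> color) \<Rightarrow> bool" where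
  "rmm_succ V N c c' \<longleftrightarrow> (\<forall>v\<in>V.
      (num_col N c Blue v > num_col N c White v \<longrightarrow> c' v = Blue) \<and>
      (num_col N c White v > num_col N c Blue v \<longrightarrow> c' v = White))"

definition monochrome :: "'a set \<Rightarrow> ('a \<Rightarrow> color) \<Rightarrow> color \<Rightarrow> bool" where
  "monochrome V c x \<longleftrightarrow> (\<forall>v\<in>V. c v = x)"

definition winning_MM :: "'a set \<Rightarrow> ('a \<Rightarrow> 'a set) \<Rightarrow> 'a set \<Rightarrow> bool" where
  "winning_MM V N S \<longleftrightarrow> S \<subseteq> V \<and>
     (\<forall>x c0. monochrome S c0 x \<longrightarrow> (\<exists>t. monochrome V ((mm_step N ^^ t) c0) x))"

definition winning_RMM :: "'a set \<Rightarrow> ('a \<Rightarrow> 'a set) \<Rightarrow> 'a set \<Rightarrow> bool" where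
  "winning_RMM V N S \<longleftrightarrow> S \<subseteq> V \<and>
     (\<forall>x run. (\<forall>t. rmm_succ V N (run t) (run (Suc t))) \<longrightarrow> monochrome S (run 0) x \<longrightarrow>
        (\<exists>t. monochrome V (run t) x))"

definition cycle_nodes :: "nat \<Rightarrow> nat set" where
  "cycle_nodes n = {..<n}"

definition cycle_nbrs :: "nat \<Rightarrow> nat \<Rightarrow> nat set" where
  "cycle_nbrs n v = {(v + 1) mod n, (v + n - 1) mod n}"

end

theory Submission
  imports Defs
begin

(* On a cycle a node has two neighbours, so it changes colour exactly when both neighbours
  disagree with it. In MM two adjacent nodes of equal colour therefore keep it forever. A winning
  set S must thus meet every edge (else two adjacent nodes outside S stay of the other colour) and
  must contain an edge (else S and its complement alternate around the cycle, and an alternating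
  colouring flips every round). Conversely, such an S wins: meeting every edge is invariant, and
  then the monochromatic blocks of length at least two gain a node in every round until they cover
  the cycle. A vertex cover of C_n containing an edge has at least n div 2 + 1 nodes, a bound
  attained by the even nodes together with n - 1. In RMM a single node of the other colour can
  walk around the cycle forever, since the tie it leaves behind may be resolved in its favour;
  hence only the full node set wins. *)

lemma num_col_two_nbrs:
  assumes "N v = {a, b}" "a \<noteq> b"
  shows "num_col N c x v = (if c a = x then 1 else 0) + (if c b = x then 1 else 0)"
proof -
  have "{u \<in> N v. c u = x} = (if c a = x then {a} else {}) \<union> (if c b = x then {b} else {})"
    using assms(1) by auto
  then show ?thesis
    unfolding num_col_def using assms(2) by simp
qed

lemma mm_step_two_nbrs:
  assumes "N v = {a, b}" "a \<noteq> b"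
  shows "mm_step N c v = (if c a = c b then c a else c v)"
  unfolding mm_step_def num_col_two_nbrs[where N = N and v = v, OF assms]
  by (cases "c a"; cases "c b") auto

lemma rmm_succ_two_nbrs:
  assumes "\<And>v. v \<in> V \<Longrightarrow> N v = {a v, b v}" "\<And>v. v \<in> V \<Longrightarrow> a v \<noteq> b v"
  shows "rmm_succ V N c c' \<longleftrightarrow> (\<forall>v\<in>V. c (a v) = c (b v) \<longrightarrow> c' v = c (a v))"
  unfolding rmm_succ_def
proof (rule ball_cong[OF refl])
  fix v assume "v \<in> V"
  then show "((num_col N c White v < num_col N c Blue v \<longrightarrow> c' v = Blue) \<and>
      (num_col N c Blue v < num_col N c White v \<longrightarrow> c' v = White)) \<longleftrightarrow>
    (c (a v) = c (b v) \<longrightarrow> c' v = c (a v))"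
    using num_col_two_nbrs[where N = N and v = v, OF assms]
    by (cases "c (a v)"; cases "c (b v)") auto
qed

definition cycle_succ :: "nat \<Rightarrow> nat \<Rightarrow> nat" where
  "cycle_succ n v = Suc v mod n"

definition cycle_pred :: "nat \<Rightarrow> nat \<Rightarrow> nat" where
  "cycle_pred n v = (v + n - 1) mod n"

lemma cycle_nbrs_eq: "cycle_nbrs n v = {cycle_succ n v, cycle_pred n v}"
  by (simp add: cycle_nbrs_def cycle_succ_def cycle_pred_def)

lemma cycle_succ_eq: "v < n \<Longrightarrow> cycle_succ n v = (if Suc v = n then 0 else Suc v)"
  by (simp add: cycle_succ_def)

lemma cycle_pred_eq: "v < n \<Longrightarrow> cycle_pred n v = (if v = 0 then n - 1 else v - 1)"
  by (auto simp: cycle_pred_def le_mod_geq)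

lemma cycle_succ_less: "0 < n \<Longrightarrow> cycle_succ n v < n"
  by (simp add: cycle_succ_def)

lemma cycle_pred_less: "0 < n \<Longrightarrow> cycle_pred n v < n"
  by (simp add: cycle_pred_def)

lemma cycle_pred_succ: "v < n \<Longrightarrow> cycle_pred n (cycle_succ n v) = v"
  by (auto simp: cycle_succ_eq cycle_pred_eq)

lemma cycle_succ_pred: "v < n \<Longrightarrow> cycle_succ n (cycle_pred n v) = v"
  by (auto simp: cycle_succ_eq cycle_pred_eq)

lemma cycle_succ_neq_pred: "3 \<le> n \<Longrightarrow> v < n \<Longrightarrow> cycle_succ n v \<noteq> cycle_pred n v"
  by (auto simp: cycle_succ_eq cycle_pred_eq)

lemma cycle_succ_add_mod: "cycle_succ n ((u + t) mod n) = (u + Suc t) mod n"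
  by (simp add: cycle_succ_def mod_Suc_eq)

lemma mm_step_cycle:
  "3 \<le> n \<Longrightarrow> v < n \<Longrightarrow>
    mm_step (cycle_nbrs n) c v = (if c (cycle_succ n v) = c (cycle_pred n v) then c (cycle_succ n v) else c v)"
  by (simp add: mm_step_two_nbrs cycle_nbrs_eq cycle_succ_neq_pred)

lemma rmm_succ_cycle_iff:
  assumes "3 \<le> n"
  shows "rmm_succ (cycle_nodes n) (cycle_nbrs n) c c' \<longleftrightarrow>
    (\<forall>v<n. c (cycle_succ n v) = c (cycle_pred n v) \<longrightarrow> c' v = c (cycle_succ n v))"
proof -
  have "rmm_succ (cycle_nodes n) (cycle_nbrs n) c c' \<longleftrightarrow>
      (\<forall>v\<in>cycle_nodes n. c (cycle_succ n v) = c (cycle_pred n v) \<longrightarrow> c' v = c (cycle_succ n v))"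
    by (rule rmm_succ_two_nbrs) (simp_all add: cycle_nbrs_eq cycle_succ_neq_pred[OF assms] cycle_nodes_def)
  then show ?thesis
    unfolding cycle_nodes_def Ball_def lessThan_iff .
qed

lemma mm_step_cycle_keeps_pair:
  assumes "3 \<le> n" "v < n" "c v = x" "c (cycle_succ n v) = x"
  shows "mm_step (cycle_nbrs n) c v = x \<and> mm_step (cycle_nbrs n) c (cycle_succ n v) = x"
  using assms mm_step_cycle[OF assms(1)] cycle_pred_succ cycle_succ_less by auto

lemma funpow_mm_step_cycle_keeps_pair:
  assumes "3 \<le> n" "v < n" "c v = x" "c (cycle_succ n v) = x"
  shows "(mm_step (cycle_nbrs n) ^^ t) c v = x \<and> (mm_step (cycle_nbrs n) ^^ t) c (cycle_succ n v) = x"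
  by (induction t) (simp_all add: assms mm_step_cycle_keeps_pair)

definition alternating :: "nat \<Rightarrow> (nat \<Rightarrow> color) \<Rightarrow> bool" where
  "alternating n c \<longleftrightarrow> (\<forall>v<n. c (cycle_succ n v) \<noteq> c v)"

lemma alternating_mm_step_flips:
  assumes "3 \<le> n" "alternating n c" "v < n"
  shows "mm_step (cycle_nbrs n) c v \<noteq> c v"
proof -
  have "c v \<noteq> c (cycle_pred n v)"
    using assms cycle_pred_less[of n v] cycle_succ_pred[of v n] unfolding alternating_def by force
  moreover have "c (cycle_succ n v) \<noteq> c v"
    using assms unfolding alternating_def by blast
  ultimately show ?thesis
    unfolding mm_step_cycle[OF assms(1,3)]
    by (cases "c v"; cases "c (cycle_succ n v)"; cases "c (cycle_pred n v)") auto
qed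

lemma alternating_mm_step:
  assumes "3 \<le> n" "alternating n c"
  shows "alternating n (mm_step (cycle_nbrs n) c)"
  unfolding alternating_def
proof (intro allI impI)
  fix v assume v: "v < n"
  then have "c (cycle_succ n v) \<noteq> c v"
    using assms(2) unfolding alternating_def by blast
  moreover have "mm_step (cycle_nbrs n) c v \<noteq> c v"
    and "mm_step (cycle_nbrs n) c (cycle_succ n v) \<noteq> c (cycle_succ n v)"
    using alternating_mm_step_flips[OF assms] v assms(1) cycle_succ_less by simp_all
  ultimately show "mm_step (cycle_nbrs n) c (cycle_succ n v) \<noteq> mm_step (cycle_nbrs n) c v"
    by (cases "c v"; cases "c (cycle_succ n v)"; cases "mm_step (cycle_nbrs n) c v") auto
qed

lemma alternating_not_monochrome:
  assumes "0 < n" "alternating n c"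
  shows "\<not> monochrome (cycle_nodes n) c x"
  using assms cycle_succ_less[of n 0] unfolding alternating_def monochrome_def cycle_nodes_def
  by fastforce

lemma alternating_never_monochrome:
  assumes "3 \<le> n" "alternating n c"
  shows "\<not> monochrome (cycle_nodes n) ((mm_step (cycle_nbrs n) ^^ t) c) x"
proof -
  have "alternating n ((mm_step (cycle_nbrs n) ^^ t) c)"
    by (induction t) (simp_all add: assms alternating_mm_step)
  then show ?thesis
    using alternating_not_monochrome assms(1) by simp
qed

definition cycle_vertex_cover :: "nat \<Rightarrow> nat set \<Rightarrow> bool" where
  "cycle_vertex_cover n S \<longleftrightarrow> (\<forall>v<n. v \<in> S \<or> cycle_succ n v \<in> S)"

lemma cycle_vertex_cover_mm_step:
  assumes "3 \<le> n" "cycle_vertex_cover n {v. c v = x}"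
  shows "cycle_vertex_cover n {v. mm_step (cycle_nbrs n) c v = x}"
  unfolding cycle_vertex_cover_def mem_Collect_eq
proof (intro allI impI)
  fix v assume v: "v < n"
  define w where "w = cycle_succ n v"
  have w: "w < n" "cycle_pred n w = v"
    using assms v cycle_succ_less cycle_pred_succ unfolding w_def by auto
  have p: "cycle_pred n v < n" "cycle_succ n (cycle_pred n v) = v"
    using assms v cycle_pred_less cycle_succ_pred by auto
  have cover: "c u = x \<or> c (cycle_succ n u) = x" if "u < n" for u
    using assms(2) that unfolding cycle_vertex_cover_def by blast
  have "c v = x \<or> c w = x" "c (cycle_pred n v) = x \<or> c v = x" "c w = x \<or> c (cycle_succ n w) = x"
    using cover[OF v] cover[OF p(1)] cover[OF w(1)] unfolding w_def p(2) by simp_all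
  then show "mm_step (cycle_nbrs n) c v = x \<or> mm_step (cycle_nbrs n) c (cycle_succ n v) = x"
    unfolding w_def[symmetric] mm_step_cycle[OF assms(1) v] mm_step_cycle[OF assms(1) w(1)] w(2)
    by (cases x; cases "c v"; cases "c w"; cases "c (cycle_pred n v)"; cases "c (cycle_succ n w)") auto
qed

definition paired :: "nat \<Rightarrow> color \<Rightarrow> (nat \<Rightarrow> color) \<Rightarrow> nat \<Rightarrow> bool" where
  "paired n x c v \<longleftrightarrow> c v = x \<and> (c (cycle_succ n v) = x \<or> c (cycle_pred n v) = x)"

lemma paired_mm_step:
  assumes n: "3 \<le> n" and v: "v < n" and "paired n x c v"
  shows "paired n x (mm_step (cycle_nbrs n) c) v"
proof -
  have cv: "c v = x" using assms(3) unfolding paired_def by blast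
  show ?thesis
  proof (cases "c (cycle_succ n v) = x")
    case True
    then show ?thesis using mm_step_cycle_keeps_pair[where c = c, OF n v cv] unfolding paired_def by blast
  next
    case False
    then have "c (cycle_pred n v) = x" using assms(3) unfolding paired_def by blast
    moreover have "cycle_pred n v < n" using n cycle_pred_less by simp
    ultimately show ?thesis
      using mm_step_cycle_keeps_pair[OF n, of "cycle_pred n v" c x] cycle_succ_pred[OF v] cv
      unfolding paired_def by simp
  qed
qed

lemma cycle_succ_closed_contains:
  assumes closed: "\<forall>v<n. v \<in> A \<longrightarrow> cycle_succ n v \<in> A" and "a \<in> A" "a < n" "v < n"
  shows "v \<in> A"
proof -
  have "(a + k) mod n \<in> A" for k
  proof (induction k)
    case 0
    then show ?case using assms by simp
  next
    case (Suc k)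
    then show ?case
      using closed \<open>a < n\<close> cycle_succ_add_mod[of n a k] by (metis mod_less_divisor gr_implies_not0 neq0_conv)
  qed
  moreover have "(a + (n - a + v)) mod n = v" using assms(3,4) by simp
  ultimately show ?thesis by metis
qed

lemma paired_spreads:
  assumes n: "3 \<le> n" and cover: "cycle_vertex_cover n {v. c v = x}"
    and a: "a < n" "paired n x c a" and u: "u < n" "\<not> paired n x c u"
  shows "\<exists>w<n. \<not> paired n x c w \<and> paired n x (mm_step (cycle_nbrs n) c) w"
proof -
  obtain v where v: "v < n" "paired n x c v" "\<not> paired n x c (cycle_succ n v)"
    using cycle_succ_closed_contains[of n "{v. paired n x c v}"] a u by blast
  define w where "w = cycle_succ n v"
  have w: "w < n" "cycle_pred n w = v"
    using n v(1) cycle_succ_less cycle_pred_succ unfolding w_def by auto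
  have "c v = x" using v(2) unfolding paired_def by blast
  moreover have "c w \<noteq> x" using v(3) \<open>c v = x\<close> w(2) unfolding w_def[symmetric] paired_def by auto
  then have "c (cycle_succ n w) = x" using cover w(1) unfolding cycle_vertex_cover_def by blast
  ultimately have "mm_step (cycle_nbrs n) c w = x" "mm_step (cycle_nbrs n) c v = x"
    using mm_step_cycle[OF n w(1)] w(2) paired_mm_step[OF n v(1,2)] unfolding paired_def by auto
  then have "paired n x (mm_step (cycle_nbrs n) c) w" unfolding paired_def using w(2) by simp
  then show ?thesis using v(3) w(1) unfolding w_def by blast
qed

lemma mm_step_cycle_converges:
  assumes n: "3 \<le> n"
  shows "cycle_vertex_cover n {v. c v = x} \<Longrightarrow> a < n \<Longrightarrow> paired n x c a \<Longrightarrow>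
    \<exists>t. \<forall>v<n. (mm_step (cycle_nbrs n) ^^ t) c v = x"
proof (induction "card {v. v < n \<and> \<not> paired n x c v}" arbitrary: c rule: less_induct)
  case less
  let ?c' = "mm_step (cycle_nbrs n) c"
  show ?case
  proof (cases "\<exists>u<n. \<not> paired n x c u")
    case False
    then have "\<forall>v<n. (mm_step (cycle_nbrs n) ^^ 0) c v = x" unfolding paired_def by simp
    then show ?thesis by blast
  next
    case True
    then obtain w where w: "w < n" "\<not> paired n x c w" "paired n x ?c' w"
      using paired_spreads[OF n less.prems] by blast
    have "{v. v < n \<and> \<not> paired n x ?c' v} \<subset> {v. v < n \<and> \<not> paired n x c v}"
      using paired_mm_step[OF n] w by blast
    then have "card {v. v < n \<and> \<not> paired n x ?c' v} < card {v. v < n \<and> \<not> paired n x c v}"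
      by (simp add: psubset_card_mono)
    then obtain t where "\<forall>v<n. (mm_step (cycle_nbrs n) ^^ t) ?c' v = x"
      using less.hyps cycle_vertex_cover_mm_step[OF n less.prems(1)] less.prems(2)
        paired_mm_step[OF n less.prems(2,3)] by blast
    then have "\<forall>v<n. (mm_step (cycle_nbrs n) ^^ Suc t) c v = x"
      by (simp add: funpow_Suc_right del: funpow.simps)
    then show ?thesis by blast
  qed
qed

lemma winning_MM_cycle_vertex_cover:
  assumes n: "3 \<le> n" and W: "winning_MM (cycle_nodes n) (cycle_nbrs n) S"
  shows "cycle_vertex_cover n S"
  unfolding cycle_vertex_cover_def
proof (rule ccontr)
  assume "\<not> (\<forall>v<n. v \<in> S \<or> cycle_succ n v \<in> S)"
  then obtain v where v: "v < n" "v \<notin> S" "cycle_succ n v \<notin> S" by blast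
  define c where "c = (\<lambda>u. if u \<in> S then Blue else White)"
  have "monochrome S c Blue" unfolding monochrome_def c_def by simp
  then obtain t where "monochrome (cycle_nodes n) ((mm_step (cycle_nbrs n) ^^ t) c) Blue"
    using W unfolding winning_MM_def by blast
  moreover have "(mm_step (cycle_nbrs n) ^^ t) c v = White"
    using funpow_mm_step_cycle_keeps_pair[OF n v(1), of c White] v unfolding c_def by simp
  ultimately show False using v(1) unfolding monochrome_def cycle_nodes_def by auto
qed

lemma winning_MM_cycle_adjacent_pair:
  assumes n: "3 \<le> n" and W: "winning_MM (cycle_nodes n) (cycle_nbrs n) S"
  shows "\<exists>a<n. a \<in> S \<and> cycle_succ n a \<in> S"
proof (rule ccontr)
  assume no_pair: "\<not> (\<exists>a<n. a \<in> S \<and> cycle_succ n a \<in> S)"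
  define c where "c = (\<lambda>u. if u \<in> S then Blue else White)"
  have "alternating n c"
    using no_pair winning_MM_cycle_vertex_cover[OF assms]
    unfolding alternating_def cycle_vertex_cover_def c_def by auto
  moreover have "monochrome S c Blue" unfolding monochrome_def c_def by simp
  then obtain t where "monochrome (cycle_nodes n) ((mm_step (cycle_nbrs n) ^^ t) c) Blue"
    using W unfolding winning_MM_def by blast
  ultimately show False using alternating_never_monochrome[OF n] by blast
qed

lemma winning_MM_cycle_iff:
  assumes n: "3 \<le> n"
  shows "winning_MM (cycle_nodes n) (cycle_nbrs n) S \<longleftrightarrow>
    S \<subseteq> cycle_nodes n \<and> cycle_vertex_cover n S \<and> (\<exists>a<n. a \<in> S \<and> cycle_succ n a \<in> S)"
proof
  assume "winning_MM (cycle_nodes n) (cycle_nbrs n) S"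
  then show "S \<subseteq> cycle_nodes n \<and> cycle_vertex_cover n S \<and> (\<exists>a<n. a \<in> S \<and> cycle_succ n a \<in> S)"
    using winning_MM_cycle_vertex_cover[OF n] winning_MM_cycle_adjacent_pair[OF n]
    unfolding winning_MM_def by blast
next
  assume S: "S \<subseteq> cycle_nodes n \<and> cycle_vertex_cover n S \<and> (\<exists>a<n. a \<in> S \<and> cycle_succ n a \<in> S)"
  then obtain a where a: "a < n" "a \<in> S" "cycle_succ n a \<in> S" by blast
  show "winning_MM (cycle_nodes n) (cycle_nbrs n) S"
    unfolding winning_MM_def
  proof (intro conjI allI impI)
    fix x c
    assume "monochrome S c x"
    then have "cycle_vertex_cover n {v. c v = x}" "paired n x c a"
      using S a unfolding monochrome_def cycle_vertex_cover_def paired_def by auto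
    then obtain t where "\<forall>v<n. (mm_step (cycle_nbrs n) ^^ t) c v = x"
      using mm_step_cycle_converges[OF n _ a(1)] by blast
    then show "\<exists>t. monochrome (cycle_nodes n) ((mm_step (cycle_nbrs n) ^^ t) c) x"
      unfolding monochrome_def cycle_nodes_def by auto
  qed (use S in blast)
qed

lemma cycle_vertex_cover_card:
  assumes S: "S \<subseteq> cycle_nodes n" and cover: "cycle_vertex_cover n S"
    and a: "a < n" "a \<in> S" "cycle_succ n a \<in> S"
  shows "n div 2 + 1 \<le> card S"
proof -
  define C where "C = cycle_nodes n - S"
  have "inj_on (cycle_succ n) C"
  proof (rule inj_onI)
    fix u w assume "u \<in> C" "w \<in> C" "cycle_succ n u = cycle_succ n w"
    then show "u = w" using cycle_pred_succ unfolding C_def cycle_nodes_def by (metis DiffD1 lessThan_iff)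
  qed
  moreover have "cycle_succ n u \<in> S - {cycle_succ n a}" if "u \<in> C" for u
  proof -
    have "u < n" "u \<notin> S" using that unfolding C_def cycle_nodes_def by auto
    then have "cycle_succ n u \<in> S" using cover unfolding cycle_vertex_cover_def by blast
    moreover have "cycle_succ n u \<noteq> cycle_succ n a"
      using \<open>u < n\<close> \<open>u \<notin> S\<close> a(1,2) cycle_pred_succ by metis
    ultimately show ?thesis by blast
  qed
  moreover have fin: "finite S" using S finite_subset unfolding cycle_nodes_def by blast
  ultimately have "card C \<le> card (S - {cycle_succ n a})"
    by (intro card_inj_on_le) auto
  also have "\<dots> = card S - 1" using a(3) fin by simp
  finally have "card C \<le> card S - 1" .
  moreover have "card C = n - card S"
    unfolding C_def using card_Diff_subset[OF fin S] by (simp add: cycle_nodes_def)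
  moreover have "card S \<noteq> 0" using a(2) fin by auto
  ultimately show ?thesis by linarith
qed

lemma card_even_below: "card {v. v < m \<and> even v} = (m + 1) div 2"
proof (induction m)
  case (Suc m)
  have "{v. v < Suc m \<and> even v} = {v. v < m \<and> even v} \<union> (if even m then {m} else {})"
    by (auto simp: less_Suc_eq)
  then show ?case using Suc by auto
qed simp

lemma card_evens_and_last:
  assumes "0 < n"
  shows "card ({v. v < n \<and> even v} \<union> {n - 1}) = n div 2 + 1"
proof (cases "even n")
  case True
  then have "n - 1 \<notin> {v. v < n \<and> even v}" using assms by auto
  then show ?thesis using True card_even_below[of n] by simp
next
  case False
  then have "n - 1 \<in> {v. v < n \<and> even v}" using assms by auto
  then show ?thesis using False card_even_below[of n] by (simp add: insert_absorb)
qed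

lemma winning_MM_cycle_evens_and_last:
  assumes n: "3 \<le> n"
  shows "winning_MM (cycle_nodes n) (cycle_nbrs n) ({v. v < n \<and> even v} \<union> {n - 1})"
    (is "winning_MM _ _ ?S")
  unfolding winning_MM_cycle_iff[OF n] cycle_vertex_cover_def
proof (intro conjI allI impI)
  fix v assume "v < n"
  then show "v \<in> ?S \<or> cycle_succ n v \<in> ?S"
    by (cases "even v") (auto simp: cycle_succ_eq)
next
  show "\<exists>a<n. a \<in> ?S \<and> cycle_succ n a \<in> ?S"
    using n by (intro exI[of _ "n - 1"]) (simp add: cycle_succ_eq)
qed (use n in \<open>auto simp: cycle_nodes_def\<close>)

lemma rmm_succ_cycle_rotate:
  assumes n: "3 \<le> n" and p: "p < n"
  shows "rmm_succ (cycle_nodes n) (cycle_nbrs n)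
    (\<lambda>v. if v = p then White else Blue) (\<lambda>v. if v = cycle_succ n p then White else Blue)"
  unfolding rmm_succ_cycle_iff[OF n]
proof (intro allI impI)
  fix v assume v: "v < n"
    and "(if cycle_succ n v = p then White else Blue) = (if cycle_pred n v = p then White else Blue)"
  then have "cycle_succ n v \<noteq> p" "cycle_pred n v \<noteq> p"
    using cycle_succ_neq_pred[OF n v] by (auto split: if_splits)
  then have "v \<noteq> cycle_succ n p" using cycle_pred_succ[OF p] by blast
  with \<open>cycle_succ n v \<noteq> p\<close> show "(if v = cycle_succ n p then White else Blue) =
      (if cycle_succ n v = p then White else Blue)" by simp
qed

lemma winning_RMM_cycle_iff:
  assumes n: "3 \<le> n"
  shows "winning_RMM (cycle_nodes n) (cycle_nbrs n) S \<longleftrightarrow> S = cycle_nodes n"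
proof
  assume W: "winning_RMM (cycle_nodes n) (cycle_nbrs n) S"
  show "S = cycle_nodes n"
  proof (rule ccontr)
    assume "S \<noteq> cycle_nodes n"
    then obtain u where u: "u < n" "u \<notin> S"
      using W unfolding winning_RMM_def cycle_nodes_def by blast
    define run where "run = (\<lambda>t v. if v = (u + t) mod n then White else Blue)"
    have "rmm_succ (cycle_nodes n) (cycle_nbrs n) (run t) (run (Suc t))" for t
      using rmm_succ_cycle_rotate[OF n, of "(u + t) mod n"] n
      unfolding run_def cycle_succ_add_mod by simp
    moreover have "monochrome S (run 0) Blue" using u unfolding monochrome_def run_def by auto
    ultimately obtain t where "monochrome (cycle_nodes n) (run t) Blue"
      using W unfolding winning_RMM_def by blast
    moreover have "(u + t) mod n \<in> cycle_nodes n" using n by (simp add: cycle_nodes_def)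
    ultimately show False unfolding monochrome_def run_def by auto
  qed
qed (auto simp: winning_RMM_def)

theorem theorem3p2:
  fixes n :: nat
  assumes "n \<ge> 3"
  shows "(\<forall>S. winning_RMM (cycle_nodes n) (cycle_nbrs n) S \<longleftrightarrow> S = cycle_nodes n)
    \<and> (\<exists>S. winning_MM (cycle_nodes n) (cycle_nbrs n) S \<and> card S = n div 2 + 1)
    \<and> (\<forall>S. winning_MM (cycle_nodes n) (cycle_nbrs n) S \<longrightarrow> n div 2 + 1 \<le> card S)"
proof (intro conjI allI impI)
  fix S
  show "winning_RMM (cycle_nodes n) (cycle_nbrs n) S \<longleftrightarrow> S = cycle_nodes n"
    using winning_RMM_cycle_iff[OF assms] .
next
  show "\<exists>S. winning_MM (cycle_nodes n) (cycle_nbrs n) S \<and> card S = n div 2 + 1"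
    using winning_MM_cycle_evens_and_last[OF assms] card_evens_and_last assms by auto
next
  fix S
  assume "winning_MM (cycle_nodes n) (cycle_nbrs n) S"
  then have "S \<subseteq> cycle_nodes n" "cycle_vertex_cover n S" "\<exists>a<n. a \<in> S \<and> cycle_succ n a \<in> S"
    unfolding winning_MM_cycle_iff[OF assms] by blast+
  then show "n div 2 + 1 \<le> card S"
    using cycle_vertex_cover_card by blast
qed

end
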